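(* Let $E\subset\mathbb R^n$ be compact with nonempty interior (closure of a bounded Lipschitz domain), and $\{\mathcal T^{(r)}\}_r$, $\mathcal T^{(r)}=\{T_1,\dots,T_{M(r)}\}$, a $\{\mathscr P_r\Lambda^k(E)\}$-admissible integral $k$-mesh with constant $C$. Let $w^{(r)}_i>0$ for $i=1,\dots,M(r)$ and let $P^{(r)}$ be the weighted discrete least squares projector onto $\mathscr P_r\Lambda^k(E)$ associated with $\mathcal T^{(r)}$ and $w^{(r)}$. Then $$\|P^{(r)}\|_{\rm op}\le C\sqrt{\sum_{i=1}^{M(r)}\frac{w_i^{(r)}}{\min_jw_j^{(r)}}}\ \dim\mathscr P_r\Lambda^k,$$ and for every $\omega\in\mathscr D_0^k(E)$ $$\|\omega-P^{(r)}\omega\|_0\le\Big(1+C\sqrt{\sum_{i=1}^{M(r)}\frac{w_i^{(r)}}{\min_jw_j^{(r)}}}\ \dim\mathscr P_r\Lambda^k\Big)d_r(\omega,E),$$ where $d_r(\omega,E)=\inf\{\|\omega-\theta\|_0:\theta\in\mathscr P_r\Lambda^k(E)\}$.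
   Context: $\mathscr D_0^k(E)$: continuous maps $E\to\Lambda^k$ with norm $\|\omega\|_0=\sup_S\mathcal H^k(S)^{-1}|\int_S\omega|$ over oriented $\mathcal H^k$-measurable $k$-rectifiable $S\subset E$, $0<\mathcal H^k(S)<\infty$; $T_S(\omega)=\mathcal H^k(S)^{-1}\int_S\omega$. $\mathscr P_r\Lambda^k(E)$: $k$-forms with polynomial coefficients of degree $\le r$, $\dim=\binom nk\binom{n+r}r$. An integral $k$-mesh: finite sets $\mathcal T^{(r)}$ of averaging currents over sets $\{x+Ay:y\in\Omega\}\subset E$ ($A$ of rank $k$, $\Omega\subset\mathbb R^k$ of positive finite measure), oriented by normalized wedge of columns of $A$; admissible with constant $C$: $\limsup_r(\operatorname{Card}\mathcal T^{(r)})^{1/r}\le1$ and $\|\omega\|_0\le C\max_{T\in\mathcal T^{(r)}}|T(\omega)|$ for all $\omega\in\mathscr P_r\Lambda^k(E)$. $P^{(r)}\omega=\arg\min_{\theta\in\mathscr P_r\Lambda^k(E)}\sum_iw_i^{(r)}(T_i(\omega-\theta))^2$. $\|P\|_{\rm op}=\sup_{\|\omega\|_0=1}\|P\omega\|_0$. *)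

theory Defs
  imports "HOL-Analysis.Analysis"
begin

definition hcontent :: "nat \<Rightarrow> (real^'n) set \<Rightarrow> ennreal" where
  "hcontent k A = (if A = {} then 0 else ennreal (unit_ball_vol (real k) * (diameter A / 2) ^ k))"

definition hausdorff_outer :: "nat \<Rightarrow> (real^'n) set \<Rightarrow> ennreal" where
  "hausdorff_outer k S =
     (SUP \<delta>\<in>{0<..}. INF C\<in>{C :: nat \<Rightarrow> (real^'n) set.
          S \<subseteq> (\<Union>i. C i) \<and> (\<forall>i. bounded (C i) \<and> diameter (C i) \<le> \<delta>)}.
        (\<Sum>i. hcontent k (C i)))"

definition hk_measurable :: "nat \<Rightarrow> (real^'n) set \<Rightarrow> bool" where
  "hk_measurable k S \<longleftrightarrow>
     (\<forall>A. hausdorff_outer k A = hausdorff_outer k (A \<inter> S) + hausdorff_outer k (A - S))"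

definition hausdorff_measure :: "nat \<Rightarrow> (real^'n) measure" where
  "hausdorff_measure k = measure_of UNIV {S. hk_measurable k S} (hausdorff_outer k)"

text \<open>Countable union of Lipschitz images of subsets of R^k (realised as a k-dimensional
  linear subspace V of R^n), up to an H^k-null set.\<close>
definition k_rectifiable :: "nat \<Rightarrow> (real^'n) set \<Rightarrow> bool" where
  "k_rectifiable k S \<longleftrightarrow>
     (\<exists>(f :: nat \<Rightarrow> real^'n \<Rightarrow> real^'n) (A :: nat \<Rightarrow> (real^'n) set) V.
        subspace V \<and> dim V = k \<and>
        (\<forall>i. A i \<subseteq> V \<and> (\<exists>L. L-lipschitz_on (A i) (f i))) \<and>
        hausdorff_outer k (S - (\<Union>i. f i ` A i)) = 0)"

definition approx_tangent :: "nat \<Rightarrow> (real^'n) set \<Rightarrow> real^'n \<Rightarrow> (real^'n) set \<Rightarrow> bool" where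
  "approx_tangent k S x V \<longleftrightarrow> subspace V \<and> dim V = k \<and>
     (\<forall>\<phi> :: real^'n \<Rightarrow> real. continuous_on UNIV \<phi> \<and> (\<exists>R. \<forall>y. R < norm y \<longrightarrow> \<phi> y = 0) \<longrightarrow>
        ((\<lambda>t. (1 / t ^ k) * (LINT y:S|hausdorff_measure k. \<phi> ((1 / t) *\<^sub>R (y - x))))
           \<longlongrightarrow> (LINT y:V|hausdorff_measure k. \<phi> y)) (at_right 0))"

text \<open>An orientation of S: an H^k-measurable field u of orthonormal k-frames
  (u x 0, ..., u x (k-1)) spanning the approximate tangent space at H^k-a.e. x in S;
  it represents the unit simple k-vector field u x 0 wedge ... wedge u x (k-1).\<close>
definition orientation :: "nat \<Rightarrow> (real^'n) set \<Rightarrow> (real^'n \<Rightarrow> nat \<Rightarrow> real^'n) \<Rightarrow> bool" where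
  "orientation k S u \<longleftrightarrow>
     (\<forall>i<k. (\<lambda>x. u x i) \<in> borel_measurable (hausdorff_measure k)) \<and>
     (AE x in hausdorff_measure k. x \<in> S \<longrightarrow>
        (\<forall>i<k. \<forall>j<k. u x i \<bullet> u x j = (if i = j then 1 else 0)) \<and>
        approx_tangent k S x (span (u x ` {..<k})))"

definition oriented_rect :: "nat \<Rightarrow> (real^'n) set \<Rightarrow> (real^'n) set \<Rightarrow> (real^'n \<Rightarrow> nat \<Rightarrow> real^'n) \<Rightarrow> bool" where
  "oriented_rect k E S u \<longleftrightarrow> S \<subseteq> E \<and> hk_measurable k S \<and> k_rectifiable k S \<and>
     0 < hausdorff_outer k S \<and> hausdorff_outer k S < \<infinity> \<and> orientation k S u"

text \<open>A k-covector (element of Lambda^k) is an alternating k-linear form; we represent it as a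
  function of a sequence of vectors depending only on the first k entries.\<close>
type_synonym 'n covec = "(nat \<Rightarrow> real^('n::finite)) \<Rightarrow> real"
type_synonym 'n kform = "real^'n \<Rightarrow> 'n covec"

definition is_covector :: "nat \<Rightarrow> ('n::finite) covec \<Rightarrow> bool" where
  "is_covector k \<phi> \<longleftrightarrow>
     (\<forall>v w. (\<forall>i<k. v i = w i) \<longrightarrow> \<phi> v = \<phi> w) \<and>
     (\<forall>v. \<forall>i<k. linear (\<lambda>z. \<phi> (v(i := z)))) \<and>
     (\<forall>v. \<forall>i<k. \<forall>j<k. i \<noteq> j \<and> v i = v j \<longrightarrow> \<phi> v = 0)"

definition dform :: "nat \<Rightarrow> (real^'n) set \<Rightarrow> ('n::finite) kform \<Rightarrow> bool" where
  "dform k E \<omega> \<longleftrightarrow> (\<forall>x\<in>E. is_covector k (\<omega> x)) \<and> (\<forall>v. continuous_on E (\<lambda>x. \<omega> x v))"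

definition poly_fun :: "nat \<Rightarrow> (real^'n \<Rightarrow> real) \<Rightarrow> bool" where
  "poly_fun r f \<longleftrightarrow> (\<exists>c :: ('n \<Rightarrow> nat) \<Rightarrow> real. \<forall>x.
     f x = (\<Sum>\<alpha>\<in>{\<alpha> :: 'n \<Rightarrow> nat. sum \<alpha> UNIV \<le> r}. c \<alpha> * (\<Prod>i\<in>UNIV. (x $ i) ^ \<alpha> i)))"

definition pform :: "nat \<Rightarrow> nat \<Rightarrow> ('n::finite) kform \<Rightarrow> bool" where
  "pform r k \<theta> \<longleftrightarrow> (\<forall>x. is_covector k (\<theta> x)) \<and> (\<forall>v. poly_fun r (\<lambda>x. \<theta> x v))"

definition pdim :: "nat \<Rightarrow> nat \<Rightarrow> nat \<Rightarrow> nat" where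
  "pdim n k r = (n choose k) * ((n + r) choose r)"

definition avg_current :: "nat \<Rightarrow> (real^'n) set \<Rightarrow> (real^'n \<Rightarrow> nat \<Rightarrow> real^'n) \<Rightarrow> ('n::finite) kform \<Rightarrow> real" where
  "avg_current k S u \<omega> =
     (LINT x:S|hausdorff_measure k. \<omega> x (u x)) / enn2real (hausdorff_outer k S)"

definition norm0 :: "nat \<Rightarrow> (real^'n) set \<Rightarrow> ('n::finite) kform \<Rightarrow> real" where
  "norm0 k E \<omega> = Sup {\<bar>avg_current k S u \<omega>\<bar> | S u. oriented_rect k E S u}"

definition dist_poly :: "nat \<Rightarrow> nat \<Rightarrow> (real^'n) set \<Rightarrow> ('n::finite) kform \<Rightarrow> real" where
  "dist_poly r k E \<omega> = Inf {norm0 k E (\<omega> - \<theta>) | \<theta>. pform r k \<theta>}"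

definition lebesgue_k :: "nat \<Rightarrow> (nat \<Rightarrow> real) measure" where
  "lebesgue_k k = completion (Pi\<^sub>M {..<k} (\<lambda>_. lborel))"

text \<open>(S,u) is the averaging current over S = {x0 + A y : y \<in> \<Omega>} \<subseteq> E, A = (a 0 | ... | a (k-1))
  of rank k, \<Omega> of positive finite Lebesgue measure, oriented by the normalized wedge of the
  columns of A: u x 0 \<and> ... \<and> u x (k-1) is a positive multiple of a 0 \<and> ... \<and> a (k-1)
  (tested against all k-covectors).\<close>
definition mesh_current :: "nat \<Rightarrow> (real^'n) set \<Rightarrow> (real^'n) set \<Rightarrow> (real^'n \<Rightarrow> nat \<Rightarrow> real^'n) \<Rightarrow> bool" where
  "mesh_current k E S u \<longleftrightarrow> oriented_rect k E S u \<and>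
     (\<exists>x0 (a :: nat \<Rightarrow> real^'n) \<Omega>.
        dim (a ` {..<k}) = k \<and>
        \<Omega> \<in> sets (lebesgue_k k) \<and> 0 < emeasure (lebesgue_k k) \<Omega> \<and> emeasure (lebesgue_k k) \<Omega> < \<infinity> \<and>
        S = {x0 + (\<Sum>i<k. y i *\<^sub>R a i) | y. y \<in> \<Omega>} \<and>
        (\<forall>x\<in>S. \<exists>c>0. \<forall>\<phi>. is_covector k \<phi> \<longrightarrow> \<phi> (u x) = c * \<phi> a))"

definition admissible_mesh :: "nat \<Rightarrow> (real^'n) set \<Rightarrow>
    (nat \<Rightarrow> nat \<Rightarrow> (real^'n) set \<times> (real^'n \<Rightarrow> nat \<Rightarrow> real^'n)) \<Rightarrow> (nat \<Rightarrow> nat) \<Rightarrow> real \<Rightarrow> bool" where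
  "admissible_mesh k E T M C \<longleftrightarrow>
     (\<forall>r. 0 < M r \<and> (\<forall>i<M r. mesh_current k E (fst (T r i)) (snd (T r i)))) \<and>
     limsup (\<lambda>r. ereal (real (card ((\<lambda>i. avg_current k (fst (T r i)) (snd (T r i))) ` {..<M r}))
                          powr (1 / real r))) \<le> 1 \<and>
     (\<forall>r \<theta>. pform r k \<theta> \<longrightarrow>
        norm0 k E \<theta> \<le> C * Max ((\<lambda>i. \<bar>avg_current k (fst (T r i)) (snd (T r i)) \<theta>\<bar>) ` {..<M r}))"

definition is_lsq :: "nat \<Rightarrow> nat \<Rightarrow> (nat \<Rightarrow> (real^'n) set \<times> (real^'n \<Rightarrow> nat \<Rightarrow> real^'n)) \<Rightarrow> nat \<Rightarrow>
    (nat \<Rightarrow> real) \<Rightarrow> ('n::finite) kform \<Rightarrow> ('n::finite) kform \<Rightarrow> bool" where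
  "is_lsq r k T m w \<omega> p \<longleftrightarrow> pform r k p \<and>
     (\<forall>\<theta>. pform r k \<theta> \<longrightarrow>
        (\<Sum>i<m. w i * (avg_current k (fst (T i)) (snd (T i)) (\<omega> - p))\<^sup>2)
          \<le> (\<Sum>i<m. w i * (avg_current k (fst (T i)) (snd (T i)) (\<omega> - \<theta>))\<^sup>2))"

end

(* The averaging currents T_i are linear functionals on continuous forms, bounded by the norm
   ||.||_0. Minimality of the weighted least squares fit P omega makes the residuals
   T_i (omega - P omega) orthogonal to the values T_i (P omega) in the inner product weighted
   by w, so sum_i w_i T_i(P omega)^2 <= sum_i w_i T_i(omega)^2 <= ||omega||_0^2 sum_i w_i and
   hence max_i |T_i (P omega)| <= ||omega||_0 sqrt (sum_i w_i / min_j w_j). Admissibility of the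
   mesh turns this into ||P omega||_0 <= C sqrt (sum_i w_i / min_j w_j) ||omega||_0, which is
   stronger than the claimed bound since dim P_r Lambda^k >= 1. As P (omega - theta) =
   P omega - theta for polynomial forms theta, the error bound follows from the triangle
   inequality.

   Integrating continuous forms against H^k requires open sets to be H^k-measurable; this holds
   because H^k is additive on positively separated sets. *)

theory Submission
  imports Defs
begin

definition hausdorff_approx :: "nat \<Rightarrow> real \<Rightarrow> (real^'n) set \<Rightarrow> ennreal" where
  "hausdorff_approx k \<delta> S = (INF C\<in>{C :: nat \<Rightarrow> (real^'n) set.
      S \<subseteq> (\<Union>i. C i) \<and> (\<forall>i. bounded (C i) \<and> diameter (C i) \<le> \<delta>)}. (\<Sum>i. hcontent k (C i)))"

lemma hausdorff_outer_eq_SUP_approx: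
  "hausdorff_outer k S = (SUP \<delta>\<in>{0<..}. hausdorff_approx k \<delta> S)"
  unfolding hausdorff_outer_def hausdorff_approx_def by simp

lemma hausdorff_approx_le_cover:
  assumes "S \<subseteq> (\<Union>i. C i)" "\<And>i. bounded (C i)" "\<And>i. diameter (C i) \<le> \<delta>"
  shows "hausdorff_approx k \<delta> S \<le> (\<Sum>i. hcontent k (C i))"
  unfolding hausdorff_approx_def using assms by (intro INF_lower) auto

lemma hausdorff_approx_near_cover:
  assumes "hausdorff_approx k \<delta> S < top" "0 < e"
  shows "\<exists>C. (S \<subseteq> (\<Union>i. C i) \<and> (\<forall>i. bounded (C i) \<and> diameter (C i) \<le> \<delta>)) \<and>
    (\<Sum>i. hcontent k (C i)) < hausdorff_approx k \<delta> S + ennreal e"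
proof -
  have "hausdorff_approx k \<delta> S < hausdorff_approx k \<delta> S + ennreal e"
    using assms by simp
  then show ?thesis
    unfolding hausdorff_approx_def[of k \<delta> S] INF_less_iff by auto
qed

lemma hausdorff_approx_mono: "A \<subseteq> B \<Longrightarrow> hausdorff_approx k \<delta> A \<le> hausdorff_approx k \<delta> B"
  unfolding hausdorff_approx_def by (rule INF_superset_mono) auto

lemma hausdorff_approx_antimono:
  "\<delta> \<le> \<delta>' \<Longrightarrow> hausdorff_approx k \<delta>' A \<le> hausdorff_approx k \<delta> A"
  unfolding hausdorff_approx_def by (rule INF_superset_mono) (auto intro: order_trans)

lemma hausdorff_approx_le_outer: "0 < \<delta> \<Longrightarrow> hausdorff_approx k \<delta> A \<le> hausdorff_outer k A"
  unfolding hausdorff_outer_eq_SUP_approx by (rule SUP_upper) auto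

lemma hausdorff_outer_mono: "A \<subseteq> B \<Longrightarrow> hausdorff_outer k A \<le> hausdorff_outer k B"
  unfolding hausdorff_outer_eq_SUP_approx by (intro SUP_mono) (auto intro: hausdorff_approx_mono)

lemma hausdorff_outer_empty [simp]: "hausdorff_outer k {} = 0"
proof -
  have "hausdorff_approx k \<delta> {} = 0" if "0 < \<delta>" for \<delta>
    using that hausdorff_approx_le_cover[of "{}" "\<lambda>_. {}" \<delta> k] by (simp add: hcontent_def)
  then show ?thesis
    unfolding hausdorff_outer_eq_SUP_approx by (intro antisym SUP_least) auto
qed

lemma hausdorff_approx_countably_subadditive:
  "hausdorff_approx k \<delta> (\<Union>n. A n) \<le> (\<Sum>n. hausdorff_approx k \<delta> (A n))"
proof (rule ennreal_le_epsilon)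
  fix e :: real assume fin: "(\<Sum>n. hausdorff_approx k \<delta> (A n)) < top" and "0 < e"
  have "\<exists>C. (A n \<subseteq> (\<Union>i. C i) \<and> (\<forall>i. bounded (C i) \<and> diameter (C i) \<le> \<delta>)) \<and>
      (\<Sum>i. hcontent k (C i)) < hausdorff_approx k \<delta> (A n) + ennreal (e * (1/2) ^ Suc n)" for n
    using \<open>0 < e\<close> by (intro hausdorff_approx_near_cover ennreal_suminf_lessD[OF fin]) simp
  then obtain C where C: "\<And>n. A n \<subseteq> (\<Union>i. C n i)" "\<And>n i. bounded (C n i)"
    "\<And>n i. diameter (C n i) \<le> \<delta>"
    "\<And>n. (\<Sum>i. hcontent k (C n i)) < hausdorff_approx k \<delta> (A n) + ennreal (e * (1/2) ^ Suc n)"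
    by metis
  define D where "D m = case_prod C (prod_decode m)" for m
  have "(\<Union>n. A n) \<subseteq> (\<Union>m. D m)"
    using C(1) by (force simp: D_def intro: exI[of _ "prod_encode (_, _)"])
  then have "hausdorff_approx k \<delta> (\<Union>n. A n) \<le> (\<Sum>m. hcontent k (D m))"
    by (rule hausdorff_approx_le_cover) (auto simp: D_def C split: prod.splits)
  also have "\<dots> = (\<Sum>n. \<Sum>i. hcontent k (C n i))"
    unfolding D_def by (subst suminf_ennreal_2dimen[symmetric]) (auto simp: case_prod_beta)
  also have "\<dots> \<le> (\<Sum>n. hausdorff_approx k \<delta> (A n) + ennreal (e * (1/2) ^ Suc n))"
    by (intro suminf_le) (use C(4) in \<open>auto intro: less_imp_le\<close>)
  also have "\<dots> = (\<Sum>n. hausdorff_approx k \<delta> (A n)) + (\<Sum>n. ennreal (e * (1/2) ^ Suc n))"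
    by (rule suminf_add[symmetric]) auto
  also have "(\<Sum>n. ennreal (e * (1/2) ^ Suc n)) = ennreal (e * 1)"
    using \<open>0 < e\<close> by (intro suminf_ennreal_eq sums_mult power_half_series) auto
  finally show "hausdorff_approx k \<delta> (\<Union>n. A n) \<le> (\<Sum>n. hausdorff_approx k \<delta> (A n)) + ennreal e"
    by simp
qed

lemma hausdorff_outer_countably_subadditive:
  "hausdorff_outer k (\<Union>n. A n) \<le> (\<Sum>n. hausdorff_outer k (A n))"
  unfolding hausdorff_outer_eq_SUP_approx[of k "\<Union>n. A n"]
proof (rule SUP_least)
  fix \<delta> :: real assume "\<delta> \<in> {0<..}"
  then have "(\<Sum>n. hausdorff_approx k \<delta> (A n)) \<le> (\<Sum>n. hausdorff_outer k (A n))"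
    by (intro suminf_le hausdorff_approx_le_outer) auto
  with hausdorff_approx_countably_subadditive
  show "hausdorff_approx k \<delta> (\<Union>n. A n) \<le> (\<Sum>n. hausdorff_outer k (A n))"
    by (rule order_trans)
qed

lemma hausdorff_approx_separated_add:
  assumes "0 < \<delta>" "\<delta> < e" and sep: "\<forall>x\<in>X. \<forall>y\<in>Y. e \<le> dist x y"
  shows "hausdorff_approx k \<delta> X + hausdorff_approx k \<delta> Y \<le> hausdorff_approx k \<delta> (X \<union> Y)"
  unfolding hausdorff_approx_def[of k \<delta> "X \<union> Y"]
proof (rule INF_greatest, clarify)
  fix C :: "nat \<Rightarrow> (real^'a) set"
  assume cov: "X \<union> Y \<subseteq> (\<Union>i. C i)" and C: "\<forall>i. bounded (C i) \<and> diameter (C i) \<le> \<delta>"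
  define C1 where "C1 i = (if C i \<inter> X = {} then {} else C i)" for i
  define C2 where "C2 i = (if C i \<inter> Y = {} then {} else C i)" for i
  have cov12: "hausdorff_approx k \<delta> X \<le> (\<Sum>i. hcontent k (C1 i))"
    "hausdorff_approx k \<delta> Y \<le> (\<Sum>i. hcontent k (C2 i))"
    by (rule hausdorff_approx_le_cover; use cov C \<open>0 < \<delta>\<close> in \<open>fastforce simp: C1_def C2_def\<close>)+
  \<comment> \<open>a set of diameter below e cannot meet both X and Y\<close>
  have "hcontent k (C1 i) + hcontent k (C2 i) \<le> hcontent k (C i)" for i
  proof (cases "C i \<inter> X = {} \<or> C i \<inter> Y = {}")
    case False
    then obtain x y where "x \<in> C i" "x \<in> X" "y \<in> C i" "y \<in> Y" by blast
    moreover have "dist x y \<le> diameter (C i)"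
      using C calculation by (intro diameter_bounded_bound) auto
    moreover have "diameter (C i) \<le> \<delta>" "e \<le> dist x y"
      using C sep calculation by auto
    ultimately show ?thesis using \<open>\<delta> < e\<close> by linarith
  qed (auto simp: C1_def C2_def hcontent_def)
  then have "(\<Sum>i. hcontent k (C1 i)) + (\<Sum>i. hcontent k (C2 i)) \<le> (\<Sum>i. hcontent k (C i))"
    by (subst suminf_add) (auto intro: suminf_le)
  with cov12 show "hausdorff_approx k \<delta> X + hausdorff_approx k \<delta> Y \<le> (\<Sum>i. hcontent k (C i))"
    by (meson add_mono order_trans)
qed

lemma hausdorff_outer_separated_add:
  assumes "0 < e" and sep: "\<forall>x\<in>X. \<forall>y\<in>Y. e \<le> dist x y"
  shows "hausdorff_outer k X + hausdorff_outer k Y \<le> hausdorff_outer k (X \<union> Y)"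
proof -
  have approx: "hausdorff_approx k \<delta>1 X + hausdorff_approx k \<delta>2 Y \<le> hausdorff_outer k (X \<union> Y)"
    if "0 < \<delta>1" "0 < \<delta>2" for \<delta>1 \<delta>2
  proof -
    define \<delta> where "\<delta> = min (min \<delta>1 \<delta>2) (e/2)"
    have \<delta>: "0 < \<delta>" "\<delta> < e" "\<delta> \<le> \<delta>1" "\<delta> \<le> \<delta>2" using that \<open>0 < e\<close> by (auto simp: \<delta>_def)
    then have "hausdorff_approx k \<delta>1 X + hausdorff_approx k \<delta>2 Y
        \<le> hausdorff_approx k \<delta> X + hausdorff_approx k \<delta> Y"
      by (intro add_mono hausdorff_approx_antimono)
    also have "\<dots> \<le> hausdorff_approx k \<delta> (X \<union> Y)"
      using \<delta> sep by (intro hausdorff_approx_separated_add)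
    also have "\<dots> \<le> hausdorff_outer k (X \<union> Y)"
      using \<delta> by (intro hausdorff_approx_le_outer)
    finally show ?thesis .
  qed
  show ?thesis
    unfolding hausdorff_outer_eq_SUP_approx[of k X] hausdorff_outer_eq_SUP_approx[of k Y]
    by (simp add: ennreal_SUP_add_left[symmetric] ennreal_SUP_add_right)
      (intro SUP_least approx; simp)
qed

section \<open>Open sets are measurable for metric outer measures\<close>

lemma sum_lessThan_even_odd:
  fixes f :: "nat \<Rightarrow> 'a::comm_monoid_add"
  shows "(\<Sum>j<2*n. f j) = (\<Sum>i<n. f (2*i)) + (\<Sum>i<n. f (2*i+1))"
  by (induction n) (auto simp: ac_simps)

definition infdist_level :: "'a::metric_space set \<Rightarrow> 'a set \<Rightarrow> nat \<Rightarrow> 'a set" where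
  "infdist_level A F j = {x\<in>A. 1 / real (Suc j) \<le> infdist x F}"

definition infdist_shell :: "'a::metric_space set \<Rightarrow> 'a set \<Rightarrow> nat \<Rightarrow> 'a set" where
  "infdist_shell A F j = infdist_level A F (Suc j) - infdist_level A F j"

lemma infdist_shell_subset: "infdist_shell A F j \<subseteq> A"
  by (auto simp: infdist_level_def infdist_shell_def)

lemma infdist_levels_cover:
  assumes "\<forall>x\<in>A. 0 < infdist x F"
  shows "A \<subseteq> infdist_level A F N \<union> (\<Union>i. infdist_shell A F (i + N))"
proof
  fix x assume "x \<in> A"
  then obtain m where "inverse (real (Suc m)) < infdist x F"
    using assms reals_Archimedean by blast
  moreover have "1 / real (Suc (N + m)) \<le> inverse (real (Suc m))"
    by (simp add: inverse_eq_divide frac_le)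
  ultimately have "x \<in> infdist_level A F (N + m)"
    using \<open>x \<in> A\<close> by (auto simp: infdist_level_def)
  moreover have "x \<in> infdist_level A F (N + m) \<longrightarrow>
      x \<in> infdist_level A F N \<or> (\<exists>i. x \<in> infdist_shell A F (i + N))" for m
    by (induction m) (auto simp: infdist_shell_def add.commute)
  ultimately show "x \<in> infdist_level A F N \<union> (\<Union>i. infdist_shell A F (i + N))"
    by blast
qed

locale metric_outer_measure =
  fixes \<mu> :: "'a::metric_space set \<Rightarrow> ennreal"
  assumes empty: "\<mu> {} = 0"
    and mono: "A \<subseteq> B \<Longrightarrow> \<mu> A \<le> \<mu> B"
    and countably_subadditive: "\<mu> (\<Union>n. S n) \<le> (\<Sum>n. \<mu> (S n))"
    and separated_add: "0 < e \<Longrightarrow> \<forall>x\<in>X. \<forall>y\<in>Y. e \<le> dist x y \<Longrightarrow> \<mu> X + \<mu> Y \<le> \<mu> (X \<union> Y)"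
begin

lemma subadditive: "\<mu> (A \<union> B) \<le> \<mu> A + \<mu> B"
proof -
  define F where "F n = (if n = 0 then A else if n = 1 then B else {})" for n :: nat
  have "A \<union> B = (\<Union>n. F n)"
    by (auto simp: F_def split: if_splits)
  then have "\<mu> (A \<union> B) \<le> (\<Sum>n. \<mu> (F n))"
    using countably_subadditive by presburger
  also have "\<dots> = (\<Sum>n\<in>{0,1}. \<mu> (F n))"
    by (rule suminf_finite) (auto simp: F_def empty)
  finally show ?thesis
    by (simp add: F_def)
qed

lemma infdist_separated_add:
  assumes "\<forall>x\<in>X. a \<le> infdist x F" "\<forall>y\<in>Y. infdist y F \<le> b" "b < a"
  shows "\<mu> X + \<mu> Y \<le> \<mu> (X \<union> Y)"
proof (rule separated_add)
  show "\<forall>x\<in>X. \<forall>y\<in>Y. a - b \<le> dist x y"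
    using assms infdist_triangle by (smt (verit, best))
qed (use assms in simp)

text \<open>Shells whose indices have the same parity are at positive distance from each other.\<close>
lemma sum_shells_same_parity_le:
  "(\<Sum>i<N. \<mu> (infdist_shell A F (2*i+c))) \<le> \<mu> A"
proof -
  let ?R = "infdist_shell A F"
  have "(\<Sum>i<N. \<mu> (?R (2*i+c))) \<le> \<mu> (\<Union>i<N. ?R (2*i+c))"
  proof (induction N)
    case (Suc N)
    have "(\<Sum>i<Suc N. \<mu> (?R (2*i+c))) \<le> \<mu> (\<Union>i<N. ?R (2*i+c)) + \<mu> (?R (2*N+c))"
      using Suc.IH by (simp add: add_right_mono)
    also have "\<dots> \<le> \<mu> ((\<Union>i<N. ?R (2*i+c)) \<union> ?R (2*N+c))"
    proof (cases "N = 0")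
      case False
      show ?thesis
      proof (rule infdist_separated_add[of _ "1 / real (2*N+c)" F _ "1 / real (Suc (2*N+c))"])
        show "\<forall>x\<in>(\<Union>i<N. ?R (2*i+c)). 1 / real (2*N+c) \<le> infdist x F"
        proof
          fix x assume "x \<in> (\<Union>i<N. ?R (2*i+c))"
          then obtain i where "i < N" "1 / real (Suc (Suc (2*i+c))) \<le> infdist x F"
            by (auto simp: infdist_shell_def infdist_level_def)
          moreover have "1 / real (2*N+c) \<le> 1 / real (Suc (Suc (2*i+c)))"
            using \<open>i < N\<close> by (intro frac_le) auto
          ultimately show "1 / real (2*N+c) \<le> infdist x F"
            by linarith
        qed
        show "1 / real (Suc (2*N+c)) < 1 / real (2*N+c)"
          using False by (intro divide_strict_left_mono) auto
      qed (auto simp: infdist_shell_def infdist_level_def)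
    qed (simp add: empty)
    also have "(\<Union>i<N. ?R (2*i+c)) \<union> ?R (2*N+c) = (\<Union>i<Suc N. ?R (2*i+c))"
      by (auto simp: lessThan_Suc)
    finally show ?case .
  qed simp
  also have "\<mu> (\<Union>i<N. ?R (2*i+c)) \<le> \<mu> A"
    using infdist_shell_subset by (intro mono) blast
  finally show ?thesis .
qed

lemma suminf_shells_le: "(\<Sum>j. \<mu> (infdist_shell A F j)) \<le> \<mu> A + \<mu> A"
proof (rule suminf_le_const)
  fix n
  have "(\<Sum>j<n. \<mu> (infdist_shell A F j)) \<le> (\<Sum>j<2*n. \<mu> (infdist_shell A F j))"
    by (rule sum_mono2) auto
  also have "\<dots> = (\<Sum>i<n. \<mu> (infdist_shell A F (2*i+0))) + (\<Sum>i<n. \<mu> (infdist_shell A F (2*i+1)))"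
    by (simp add: sum_lessThan_even_odd)
  also have "\<dots> \<le> \<mu> A + \<mu> A"
    by (intro add_mono sum_shells_same_parity_le)
  finally show "(\<Sum>j<n. \<mu> (infdist_shell A F j)) \<le> \<mu> A + \<mu> A" .
qed auto

lemma infdist_level_approx:
  assumes fin: "\<mu> A < \<infinity>" and pos: "\<forall>x\<in>A. 0 < infdist x F" and "0 < e"
  shows "\<exists>j. \<mu> A \<le> \<mu> (infdist_level A F j) + ennreal e"
proof -
  define r where "r j = enn2real (\<mu> (infdist_shell A F j))" for j
  have shell_eq: "\<mu> (infdist_shell A F j) = ennreal (r j)" for j
    using mono[OF infdist_shell_subset, of A F j] fin
    by (auto simp: r_def ennreal_enn2real_if top_unique)
  have "(\<Sum>j. ennreal (r j)) \<noteq> \<infinity>"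
    using suminf_shells_le[of A F] fin unfolding shell_eq by (auto simp: top_unique)
  then have "summable r"
    by (intro summable_suminf_not_top) (auto simp: r_def)
  then obtain N where "norm (\<Sum>i. r (i + N)) < e"
    using suminf_exist_split[OF \<open>0 < e\<close>] by blast
  then have tail: "(\<Sum>i. r (i + N)) \<le> e"
    by simp
  have "\<mu> A \<le> \<mu> (infdist_level A F N \<union> (\<Union>i. infdist_shell A F (i + N)))"
    using infdist_levels_cover[OF pos] by (rule mono)
  also have "\<dots> \<le> \<mu> (infdist_level A F N) + \<mu> (\<Union>i. infdist_shell A F (i + N))"
    by (rule subadditive)
  finally have "\<mu> A \<le> \<mu> (infdist_level A F N) + \<mu> (\<Union>i. infdist_shell A F (i + N))" .
  moreover have "\<mu> (\<Union>i. infdist_shell A F (i + N)) \<le> ennreal e"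
  proof -
    have "(\<Sum>i. ennreal (r (i + N))) = ennreal (\<Sum>i. r (i + N))"
      by (intro suminf_ennreal2 summable_ignore_initial_segment \<open>summable r\<close>) (simp add: r_def)
    then show ?thesis
      using countably_subadditive[of "\<lambda>i. infdist_shell A F (i + N)"] tail
      by (simp add: shell_eq) (meson ennreal_leI order_trans)
  qed
  ultimately show ?thesis
    by (meson add_left_mono order_trans)
qed

lemma open_caratheodory:
  assumes "open U"
  shows "\<mu> A = \<mu> (A \<inter> U) + \<mu> (A - U)"
proof (rule antisym)
  show "\<mu> A \<le> \<mu> (A \<inter> U) + \<mu> (A - U)"
    using subadditive[of "A \<inter> U" "A - U"] by (simp add: Int_Diff_Un)
next
  show "\<mu> (A \<inter> U) + \<mu> (A - U) \<le> \<mu> A"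
  proof (cases "U = UNIV \<or> \<mu> A = \<infinity>")
    case False
    let ?L = "infdist_level (A \<inter> U) (- U)"
    have "\<mu> (A \<inter> U) + \<mu> (A - U) \<le> \<mu> A + ennreal e" if "0 < e" for e
    proof -
      have "\<mu> (A \<inter> U) < \<infinity>"
        using False mono[of "A \<inter> U" A] by (auto simp: less_top top_unique)
      moreover have "\<forall>x\<in>A \<inter> U. 0 < infdist x (- U)"
        using False assms by (auto intro: infdist_pos_not_in_closed)
      ultimately obtain j where j: "\<mu> (A \<inter> U) \<le> \<mu> (?L j) + ennreal e"
        using infdist_level_approx[OF _ _ \<open>0 < e\<close>] by blast
      have "\<mu> (?L j) + \<mu> (A - U) \<le> \<mu> (?L j \<union> (A - U))"
        by (rule infdist_separated_add[of _ "1 / real (Suc j)" "- U" _ 0])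
          (auto simp: infdist_level_def)
      also have "\<dots> \<le> \<mu> A"
        by (rule mono) (auto simp: infdist_level_def)
      finally have "\<mu> (?L j) + \<mu> (A - U) \<le> \<mu> A" .
      from j have "\<mu> (A \<inter> U) + \<mu> (A - U) \<le> (\<mu> (?L j) + \<mu> (A - U)) + ennreal e"
        by (metis add_right_mono add.assoc add.commute)
      also have "\<dots> \<le> \<mu> A + ennreal e"
        using \<open>\<mu> (?L j) + \<mu> (A - U) \<le> \<mu> A\<close> by (rule add_right_mono)
      finally show ?thesis .
    qed
    then show ?thesis
      by (rule ennreal_le_epsilon)
  qed (auto simp: empty)
qed

end

interpretation hausdorff: metric_outer_measure "hausdorff_outer k :: (real^'n) set \<Rightarrow> ennreal"
  by unfold_locales
    (fact hausdorff_outer_empty, fact hausdorff_outer_mono, fact hausdorff_outer_countably_subadditive,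
      fact hausdorff_outer_separated_add)

lemma hk_measurable_open: "open U \<Longrightarrow> hk_measurable k U"
  unfolding hk_measurable_def using hausdorff.open_caratheodory by blast

lemma outer_measure_space_hausdorff_outer:
  "outer_measure_space (Pow UNIV) (hausdorff_outer k :: (real^'n) set \<Rightarrow> ennreal)"
  unfolding outer_measure_space_def positive_def increasing_def countably_subadditive_def
  by (simp add: hausdorff_outer_mono hausdorff_outer_countably_subadditive)

lemma lambda_system_hausdorff_outer:
  "lambda_system UNIV (Pow UNIV) (hausdorff_outer k) = {S :: (real^'n) set. hk_measurable k S}"
proof -
  have "(UNIV - l) \<inter> A = A - l" "l \<inter> A = A \<inter> l" for l A :: "(real^'n) set"
    by auto
  then show ?thesis
    unfolding lambda_system_def hk_measurable_def by (simp; metis)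
qed

lemma measure_space_hausdorff_outer:
  "measure_space UNIV {S :: (real^'n) set. hk_measurable k S} (hausdorff_outer k)"
  using sigma_algebra.caratheodory_lemma[OF sigma_algebra_Pow outer_measure_space_hausdorff_outer]
  unfolding lambda_system_hausdorff_outer .

lemma sigma_algebra_hk_measurable: "sigma_algebra UNIV {S :: (real^'n) set. hk_measurable k S}"
  using measure_space_hausdorff_outer[of k] unfolding measure_space_def by blast

lemma space_hausdorff_measure [simp]: "space (hausdorff_measure k :: (real^'n) measure) = UNIV"
  unfolding hausdorff_measure_def by (simp add: space_measure_of_conv)

lemma sets_hausdorff_measure:
  "sets (hausdorff_measure k) = {S :: (real^'n) set. hk_measurable k S}"
  unfolding hausdorff_measure_def
  by (simp add: sets_measure_of_conv sigma_algebra.sigma_sets_eq[OF sigma_algebra_hk_measurable])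

lemma emeasure_hausdorff_measure:
  fixes S :: "(real^'n) set"
  assumes "hk_measurable k S"
  shows "emeasure (hausdorff_measure k) S = hausdorff_outer k S"
proof -
  have "positive {S :: (real^'n) set. hk_measurable k S} (hausdorff_outer k)"
    "countably_additive {S :: (real^'n) set. hk_measurable k S} (hausdorff_outer k)"
    using measure_space_hausdorff_outer[of k] unfolding measure_space_def by blast+
  then show ?thesis
    unfolding hausdorff_measure_def
    by (rule emeasure_measure_of_sigma[OF sigma_algebra_hk_measurable]) (simp add: assms)
qed

lemma borel_measurable_hausdorff_measure:
  "f \<in> borel_measurable borel \<Longrightarrow> f \<in> borel_measurable (hausdorff_measure k :: (real^'n) measure)"
proof (rule borel_measurable_subalgebra)
  show "sets borel \<subseteq> sets (hausdorff_measure k :: (real^'n) measure)"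
    unfolding sets_borel sets_hausdorff_measure
    by (rule sigma_algebra.sigma_sets_subset[OF sigma_algebra_hk_measurable])
      (auto intro: hk_measurable_open)
qed auto

section \<open>Covectors\<close>

lemma linear_arg_expansion:
  fixes \<phi> :: "(nat \<Rightarrow> real^'n) \<Rightarrow> real"
  assumes L: "linear (\<lambda>z. \<phi> (u(m := z)))"
  shows "\<phi> (u(m := x)) = (\<Sum>l\<in>UNIV. x $ l * \<phi> (u(m := axis l 1)))"
proof -
  have "x = (\<Sum>l\<in>UNIV. x $ l *\<^sub>R axis l 1)"
    by (simp add: vec_eq_iff axis_def sum_component if_distrib cong: if_cong)
  then have "\<phi> (u(m := x)) = \<phi> (u(m := (\<Sum>l\<in>UNIV. x $ l *\<^sub>R axis l 1)))"
    by (rule arg_cong)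
  also have "\<dots> = (\<Sum>l\<in>UNIV. \<phi> (u(m := x $ l *\<^sub>R axis l 1)))"
    using linear_sum[OF L] by simp
  also have "\<dots> = (\<Sum>l\<in>UNIV. x $ l * \<phi> (u(m := axis l 1)))"
    using linear_cmul[OF L] by simp
  finally show ?thesis .
qed

lemma multilinear_expansion:
  fixes \<phi> :: "(nat \<Rightarrow> real^'n) \<Rightarrow> real"
  assumes lin: "\<forall>v. \<forall>i<k. linear (\<lambda>z. \<phi> (v(i := z)))" and "m \<le> k"
  shows "\<phi> v = (\<Sum>j\<in>PiE {..<m} (\<lambda>_. UNIV).
            (\<Prod>i<m. v i $ j i) * \<phi> (\<lambda>i. if i < m then axis (j i) 1 else v i))"
  using \<open>m \<le> k\<close>
proof (induction m)
  case (Suc m)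
  let ?P = "PiE {..<m} (\<lambda>_. UNIV :: 'n set)"
  define w where "w j = (\<lambda>i. if i < m then axis (j i) 1 else v i)" for j :: "nat \<Rightarrow> 'n"
  define w' where "w' j = (\<lambda>i. if i < Suc m then axis (j i) 1 else v i)" for j :: "nat \<Rightarrow> 'n"
  have IH: "\<phi> v = (\<Sum>j\<in>?P. (\<Prod>i<m. v i $ j i) * \<phi> (w j))"
    using Suc by (simp add: w_def)
  have step: "\<phi> (w j) = (\<Sum>l\<in>UNIV. v m $ l * \<phi> (w' (j(m := l))))" for j
  proof -
    have "w j = (w j)(m := v m)" "(w j)(m := axis l 1) = w' (j(m := l))" for l
      by (auto simp: w_def w'_def fun_eq_iff)
    moreover have "linear (\<lambda>z. \<phi> ((w j)(m := z)))"
      using lin Suc.prems by auto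
    ultimately show ?thesis
      using linear_arg_expansion[of \<phi> "w j" m "v m"] by simp
  qed
  have prod_upd: "(\<Prod>i<Suc m. v i $ (j(m := l)) i) = (\<Prod>i<m. v i $ j i) * v m $ l" for j l
  proof -
    have "(\<Prod>i<m. v i $ (j(m := l)) i) = (\<Prod>i<m. v i $ j i)"
      by (intro prod.cong) auto
    then show ?thesis by simp
  qed
  have "\<phi> v = (\<Sum>j\<in>?P. \<Sum>l\<in>UNIV. (\<Prod>i<Suc m. v i $ (j(m := l)) i) * \<phi> (w' (j(m := l))))"
    unfolding IH step by (simp add: sum_distrib_left prod_upd mult.assoc)
  also have "\<dots> = (\<Sum>(l, j)\<in>UNIV \<times> ?P. (\<Prod>i<Suc m. v i $ (j(m := l)) i) * \<phi> (w' (j(m := l))))"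
    by (subst sum.swap) (simp add: sum.cartesian_product)
  also have "\<dots> = (\<Sum>j'\<in>(\<lambda>(y, g). g(m := y)) ` (UNIV \<times> ?P). (\<Prod>i<Suc m. v i $ j' i) * \<phi> (w' j'))"
    by (subst sum.reindex) (auto intro!: inj_combinator simp: case_prod_beta)
  also have "(\<lambda>(y, g). g(m := y)) ` (UNIV \<times> ?P) = PiE {..<Suc m} (\<lambda>_. UNIV)"
    by (simp add: lessThan_Suc PiE_insert_eq)
  finally show ?case by (simp add: w'_def)
qed simp

definition basis_frame :: "nat \<Rightarrow> (nat \<Rightarrow> 'n) \<Rightarrow> nat \<Rightarrow> real^'n::finite" where
  "basis_frame k j = (\<lambda>i. if i < k then axis (j i) 1 else 0)"

lemma covector_expansion:
  assumes "is_covector k \<phi>"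
  shows "\<phi> v = (\<Sum>j\<in>PiE {..<k} (\<lambda>_. UNIV). (\<Prod>i<k. v i $ j i) * \<phi> (basis_frame k j))"
proof -
  have "\<phi> (\<lambda>i. if i < k then axis (j i) 1 else v i) = \<phi> (basis_frame k j)" for j
    using assms unfolding is_covector_def basis_frame_def by (smt (verit))
  moreover have "\<forall>v. \<forall>i<k. linear (\<lambda>z. \<phi> (v(i := z)))"
    using assms by (simp add: is_covector_def)
  then have "\<phi> v = (\<Sum>j\<in>PiE {..<k} (\<lambda>_. UNIV).
      (\<Prod>i<k. v i $ j i) * \<phi> (\<lambda>i. if i < k then axis (j i) 1 else v i))"
    by (rule multilinear_expansion) simp
  ultimately show ?thesis by simp
qed

definition wedge_functionals :: "nat \<Rightarrow> (nat \<Rightarrow> real^'n \<Rightarrow> real) \<Rightarrow> (nat \<Rightarrow> real^'n) \<Rightarrow> real" where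
  "wedge_functionals k g v = (\<Sum>p\<in>{p. p permutes {..<k}}. of_int (sign p) * (\<Prod>i<k. g (p i) (v i)))"

lemma wedge_functionals_swap_eq_0:
  assumes "i < k" "j < k" "i \<noteq> j" "v i = v j"
  shows "wedge_functionals k g v = 0"
proof -
  define \<tau> where "\<tau> = Transposition.transpose i j"
  have \<tau>: "\<tau> permutes {..<k}"
    using assms unfolding \<tau>_def by (intro permutes_swap_id) auto
  have \<tau>\<tau>: "p \<circ> \<tau> \<circ> \<tau> = p" for p :: "nat \<Rightarrow> nat"
    by (simp add: \<tau>_def comp_assoc transpose_comp_involutory)
  let ?P = "{p. p permutes {..<k}}"
  let ?F = "\<lambda>p. of_int (sign p) * (\<Prod>l<k. g (p l) (v l))"
  \<comment> \<open>composing with the transposition flips the sign and fixes the product, since v i = v j\<close>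
  have flip: "- ?F (p \<circ> \<tau>) = ?F p" if "p \<in> ?P" for p
  proof -
    have "sign (p \<circ> \<tau>) = sign p * sign \<tau>"
      using that \<tau> by (intro sign_compose) (auto simp: permutation_permutes)
    moreover have "sign \<tau> = -1"
      using assms unfolding \<tau>_def by (simp add: sign_swap_id)
    moreover have "(\<Prod>l<k. g (p l) (v l)) = (\<Prod>l<k. g (p (\<tau> l)) (v (\<tau> l)))"
      using prod.permute[OF \<tau>, of "\<lambda>l. g (p l) (v l)"] by (simp add: comp_def)
    moreover have "v (\<tau> l) = v l" for l
      using assms by (auto simp: \<tau>_def Transposition.transpose_def)
    ultimately show ?thesis by simp
  qed
  have "sum ?F ?P = sum (\<lambda>p. - ?F p) ?P"
    by (rule sum.reindex_bij_witness[where i = "\<lambda>p. p \<circ> \<tau>" and j = "\<lambda>p. p \<circ> \<tau>"])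
      (use \<tau> \<tau>\<tau> flip in \<open>auto intro: permutes_compose\<close>)
  then show ?thesis
    unfolding wedge_functionals_def by (simp add: sum_negf)
qed

lemma is_covector_wedge_functionals:
  fixes g :: "nat \<Rightarrow> real^'n \<Rightarrow> real"
  assumes "\<And>j. linear (g j)"
  shows "is_covector k (wedge_functionals k g)"
  unfolding is_covector_def
proof (intro conjI allI impI)
  fix v w :: "nat \<Rightarrow> real^'n" assume "\<forall>i<k. v i = w i"
  then show "wedge_functionals k g v = wedge_functionals k g w"
    unfolding wedge_functionals_def by (intro sum.cong refl arg_cong2[where f = "(*)"] prod.cong) auto
next
  fix v :: "nat \<Rightarrow> real^'n" and i assume "i < k"
  have "wedge_functionals k g (v(i := z)) = (\<Sum>p\<in>{p. p permutes {..<k}}.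
      of_int (sign p) * (\<Prod>l\<in>{..<k} - {i}. g (p l) (v l)) * g (p i) z)" for z
    unfolding wedge_functionals_def
  proof (intro sum.cong refl)
    fix p
    have "(\<Prod>l<k. g (p l) ((v(i := z)) l))
        = g (p i) z * (\<Prod>l\<in>{..<k} - {i}. g (p l) ((v(i := z)) l))"
      using \<open>i < k\<close> by (subst prod.remove[of _ i]) auto
    also have "(\<Prod>l\<in>{..<k} - {i}. g (p l) ((v(i := z)) l)) = (\<Prod>l\<in>{..<k} - {i}. g (p l) (v l))"
      by (intro prod.cong) auto
    finally show "of_int (sign p) * (\<Prod>l<k. g (p l) ((v(i := z)) l))
        = of_int (sign p) * (\<Prod>l\<in>{..<k} - {i}. g (p l) (v l)) * g (p i) z"
      by simp
  qed
  moreover have "linear (\<lambda>z. c * g l z)" for c l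
    using assms[of l] unfolding linear_iff by (simp add: linear_add linear_cmul algebra_simps)
  ultimately show "linear (\<lambda>z. wedge_functionals k g (v(i := z)))"
    by (simp add: linear_compose_sum)
next
  fix v :: "nat \<Rightarrow> real^'n" and i j assume "i < k" "j < k" "i \<noteq> j \<and> v i = v j"
  then show "wedge_functionals k g v = 0"
    by (intro wedge_functionals_swap_eq_0[where i = i and j = j]) auto
qed

lemma wedge_functionals_dual_basis:
  assumes "\<And>i j. i < k \<Longrightarrow> j < k \<Longrightarrow> g j (a i) = (if i = j then 1 else 0)"
  shows "wedge_functionals k g a = 1"
proof -
  \<comment> \<open>only the identity permutation contributes\<close>
  have "of_int (sign p) * (\<Prod>i<k. g (p i) (a i)) = (if p = id then 1 else 0)"
    if "p permutes {..<k}" for p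
  proof (cases "p = id")
    case False
    then obtain i where "p i \<noteq> i" by (auto simp: fun_eq_iff)
    moreover from this have "i < k"
      using that by (meson lessThan_iff permutes_not_in)
    moreover from this have "p i < k"
      using that permutes_in_image by fastforce
    ultimately have "g (p i) (a i) = 0" using assms by simp
    with \<open>i < k\<close> show ?thesis
      using False by (auto simp: prod_zero_iff)
  qed (use assms in \<open>simp add: sign_id\<close>)
  then have "wedge_functionals k g a = (\<Sum>p\<in>{p. p permutes {..<k}}. if p = id then 1 else 0)"
    unfolding wedge_functionals_def by (intro sum.cong) auto
  then show ?thesis
    by (simp add: finite_permutations permutes_id)
qed

lemma dual_functionals_exist:
  fixes a :: "nat \<Rightarrow> real^'n"
  assumes "dim (a ` {..<k}) = k"
  obtains g :: "nat \<Rightarrow> real^'n \<Rightarrow> real" where "\<And>j. linear (g j)"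
    "\<And>i j. i < k \<Longrightarrow> j < k \<Longrightarrow> g j (a i) = (if i = j then 1 else 0)"
proof -
  let ?A = "a ` {..<k}"
  have "card ?A \<le> k" "k \<le> card ?A"
    using card_image_le[of "{..<k}" a] dim_le_card'[of ?A] assms by auto
  then have inj: "inj_on a {..<k}"
    by (intro eq_card_imp_inj_on) auto
  have ind: "independent ?A"
    using \<open>card ?A \<le> k\<close> assms by (intro card_le_dim_spanning[of ?A ?A]) (auto intro: span_base)
  have "\<forall>j. \<exists>h :: real^'n \<Rightarrow> real. linear h \<and> (\<forall>x\<in>?A. h x = (if x = a j then 1 else 0))"
    by (intro allI linear_independent_extend[OF ind])
  then obtain g :: "nat \<Rightarrow> real^'n \<Rightarrow> real"
    where g: "\<And>j. linear (g j)" "\<And>j x. x \<in> ?A \<Longrightarrow> g j x = (if x = a j then 1 else 0)"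
    by metis
  show ?thesis
  proof (rule that)
    show "g j (a i) = (if i = j then 1 else 0)" if "i < k" "j < k" for i j
      using g(2)[of "a i" j] inj that by (auto simp: inj_on_eq_iff)
  qed (fact g)
qed

lemma dform_frame_bound:
  fixes \<omega> :: "'n::finite kform"
  assumes "compact E" "dform k E \<omega>"
  obtains B where "0 \<le> B"
    "\<And>x (v :: nat \<Rightarrow> real^'n). x \<in> E \<Longrightarrow> (\<And>i l. i < k \<Longrightarrow> \<bar>v i $ l\<bar> \<le> 1) \<Longrightarrow> \<bar>\<omega> x v\<bar> \<le> B"
proof -
  let ?P = "PiE {..<k} (\<lambda>_. UNIV :: 'n set)"
  have "\<exists>b. \<forall>x\<in>E. \<bar>\<omega> x (basis_frame k j)\<bar> \<le> b" for j
  proof -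
    have "continuous_on E (\<lambda>x. \<omega> x (basis_frame k j))"
      using assms(2) by (simp add: dform_def)
    then have "bounded ((\<lambda>x. \<omega> x (basis_frame k j)) ` E)"
      using assms(1) by (intro compact_imp_bounded compact_continuous_image)
    then show ?thesis
      unfolding bounded_iff by auto
  qed
  then obtain b where b: "\<And>j x. x \<in> E \<Longrightarrow> \<bar>\<omega> x (basis_frame k j)\<bar> \<le> b j"
    by metis
  show ?thesis
  proof (rule that[of "\<Sum>j\<in>?P. \<bar>b j\<bar>"])
    fix x and v :: "nat \<Rightarrow> real^'n" assume "x \<in> E" and v: "\<And>i l. i < k \<Longrightarrow> \<bar>v i $ l\<bar> \<le> 1"
    have "is_covector k (\<omega> x)"
      using \<open>x \<in> E\<close> assms(2) by (simp add: dform_def)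
    then have "\<bar>\<omega> x v\<bar> = \<bar>\<Sum>j\<in>?P. (\<Prod>i<k. v i $ j i) * \<omega> x (basis_frame k j)\<bar>"
      by (subst covector_expansion) auto
    also have "\<dots> \<le> (\<Sum>j\<in>?P. \<bar>\<Prod>i<k. v i $ j i\<bar> * \<bar>\<omega> x (basis_frame k j)\<bar>)"
      by (rule order_trans[OF sum_abs]) (simp add: abs_mult)
    also have "\<dots> \<le> (\<Sum>j\<in>?P. 1 * \<bar>b j\<bar>)"
    proof (rule sum_mono, rule mult_mono)
      show "\<bar>\<Prod>i<k. v i $ j i\<bar> \<le> 1" for j
        unfolding abs_prod using v by (intro prod_le_1) auto
      show "\<bar>\<omega> x (basis_frame k j)\<bar> \<le> \<bar>b j\<bar>" for j
        using b[OF \<open>x \<in> E\<close>, of j] by linarith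
    qed auto
    finally show "\<bar>\<omega> x v\<bar> \<le> (\<Sum>j\<in>?P. \<bar>b j\<bar>)"
      by simp
  qed (simp add: sum_nonneg)
qed

lemma borel_measurable_dform_along:
  fixes \<omega> :: "'n::finite kform" and u :: "real^'n \<Rightarrow> nat \<Rightarrow> real^'n"
  assumes "closed E" "dform k E \<omega>" "S \<subseteq> E" "S \<in> sets (hausdorff_measure k)"
    and u: "\<And>i. i < k \<Longrightarrow> (\<lambda>x. u x i) \<in> borel_measurable (hausdorff_measure k)"
  shows "(\<lambda>x. indicator S x * \<omega> x (u x)) \<in> borel_measurable (hausdorff_measure k)"
proof -
  let ?M = "hausdorff_measure k :: (real^'n) measure"
  let ?P = "PiE {..<k} (\<lambda>_. UNIV :: 'n set)"
  have expand: "indicator S x * \<omega> x (u x) = (\<Sum>j\<in>?P. (\<Prod>i<k. u x i $ j i) *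
      (indicator S x * (indicator E x * \<omega> x (basis_frame k j))))" for x
  proof (cases "x \<in> S")
    case True
    with assms have "is_covector k (\<omega> x)"
      by (auto simp: dform_def)
    with True \<open>S \<subseteq> E\<close> show ?thesis
      by (subst covector_expansion) (auto simp: sum_distrib_left)
  qed simp
  have "(\<lambda>x. u x i $ l) \<in> borel_measurable ?M" if "i < k" for i l
    using measurable_compose[OF u[OF that] borel_measurable_nth] by simp
  moreover have "(\<lambda>x. indicator E x * \<omega> x (basis_frame k j)) \<in> borel_measurable ?M" for j
    using borel_measurable_continuous_on_indicator[of E "\<lambda>x. \<omega> x (basis_frame k j)"] assms(1,2)
    by (intro borel_measurable_hausdorff_measure) (simp add: dform_def)
  moreover have "(indicator S :: _ \<Rightarrow> real) \<in> borel_measurable ?M"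
    using assms(4) by simp
  ultimately have "(\<lambda>x. \<Prod>i<k. u x i $ j i) \<in> borel_measurable ?M"
      "(\<lambda>x. indicator S x * (indicator E x * \<omega> x (basis_frame k j))) \<in> borel_measurable ?M" for j
    by (auto intro!: borel_measurable_prod borel_measurable_times)
  then show ?thesis
    unfolding expand by (intro borel_measurable_sum) (rule borel_measurable_times)
qed

lemma oriented_rect_frame_entries:
  assumes "oriented_rect k E S u"
  shows "AE x in hausdorff_measure k. x \<in> S \<longrightarrow> (\<forall>i l. i < k \<longrightarrow> \<bar>u x i $ l\<bar> \<le> 1)"
proof -
  have "AE x in hausdorff_measure k. x \<in> S \<longrightarrow> (\<forall>i<k. u x i \<bullet> u x i = 1)"
    using assms unfolding oriented_rect_def orientation_def by (auto elim: AE_mp)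
  then show ?thesis
  proof (rule AE_mp, intro AE_I2 impI allI)
    fix x i l assume "x \<in> S \<longrightarrow> (\<forall>i<k. u x i \<bullet> u x i = 1)" "x \<in> S" "i < k"
    then have "norm (u x i) = 1"
      by (simp add: norm_eq_1)
    then show "\<bar>u x i $ l\<bar> \<le> 1"
      using component_le_norm_cart[of "u x i" l] by simp
  qed
qed

lemma AE_norm_dform_along_le:
  fixes \<omega> :: "'n::finite kform"
  assumes S: "oriented_rect k E S u" and "0 \<le> B"
    and B: "\<And>x (v :: nat \<Rightarrow> real^'n). x \<in> E \<Longrightarrow> (\<And>i l. i < k \<Longrightarrow> \<bar>v i $ l\<bar> \<le> 1) \<Longrightarrow> \<bar>\<omega> x v\<bar> \<le> B"
  shows "AE x in hausdorff_measure k. norm (indicator S x * \<omega> x (u x)) \<le> norm (indicator S x * B)"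
proof (rule AE_mp[OF oriented_rect_frame_entries[OF S]], intro AE_I2 impI)
  fix x assume "x \<in> S \<longrightarrow> (\<forall>i l. i < k \<longrightarrow> \<bar>u x i $ l\<bar> \<le> 1)"
  moreover have "S \<subseteq> E"
    using S by (simp add: oriented_rect_def)
  ultimately show "norm (indicator S x * \<omega> x (u x)) \<le> norm (indicator S x * B)"
    using B[of x "u x"] \<open>0 \<le> B\<close> by (auto simp: indicator_def)
qed

lemma measure_oriented_rect:
  assumes "oriented_rect k E S u"
  shows "S \<in> sets (hausdorff_measure k)" "measure (hausdorff_measure k) S = enn2real (hausdorff_outer k S)"
    "0 < enn2real (hausdorff_outer k S)"
  using assms emeasure_hausdorff_measure[of k S]
  by (auto simp: oriented_rect_def sets_hausdorff_measure measure_def enn2real_positive_iff)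

lemma avg_current_integrable_bounded:
  fixes \<omega> :: "'n::finite kform"
  assumes "compact E" "dform k E \<omega>"
  shows "\<exists>B. \<forall>S u. oriented_rect k E S u \<longrightarrow>
    set_integrable (hausdorff_measure k) S (\<lambda>x. \<omega> x (u x)) \<and> \<bar>avg_current k S u \<omega>\<bar> \<le> B"
proof -
  obtain B where "0 \<le> B" and B:
    "\<And>x (v :: nat \<Rightarrow> real^'n). x \<in> E \<Longrightarrow> (\<And>i l. i < k \<Longrightarrow> \<bar>v i $ l\<bar> \<le> 1) \<Longrightarrow> \<bar>\<omega> x v\<bar> \<le> B"
    using dform_frame_bound[OF assms] by blast
  show ?thesis
  proof (intro exI[of _ B] allI impI)
    fix S u assume or: "oriented_rect k E S u"
    let ?M = "hausdorff_measure k :: (real^'n) measure"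
    let ?f = "\<lambda>x. indicator S x * \<omega> x (u x)"
    have S: "S \<in> sets ?M" "measure ?M S = enn2real (hausdorff_outer k S)"
      "0 < enn2real (hausdorff_outer k S)"
      using measure_oriented_rect[OF or] by auto
    have bound: "AE x in ?M. norm (?f x) \<le> norm (indicator S x * B)"
      using or \<open>0 \<le> B\<close> B by (rule AE_norm_dform_along_le)
    have int_B: "integrable ?M (\<lambda>x. indicator S x * B)"
      using or S by (intro integrable_mult_left integrable_real_indicator)
        (auto simp: oriented_rect_def emeasure_hausdorff_measure)
    have "?f \<in> borel_measurable ?M"
      using or assms S by (intro borel_measurable_dform_along[where E = E])
        (auto simp: oriented_rect_def orientation_def compact_imp_closed)
    then have int_f: "integrable ?M ?f"
      by (rule Bochner_Integration.integrable_bound[OF int_B _ bound])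
    have "\<bar>integral\<^sup>L ?M ?f\<bar> \<le> integral\<^sup>L ?M (\<lambda>x. \<bar>?f x\<bar>)"
      by (rule integral_abs_bound)
    also have "\<dots> \<le> integral\<^sup>L ?M (\<lambda>x. indicator S x * B)"
      using bound \<open>0 \<le> B\<close>
      by (intro integral_mono_AE integrable_abs int_f int_B) (auto elim: AE_mp simp: abs_mult)
    also have "\<dots> = enn2real (hausdorff_outer k S) * B"
      using S by simp
    finally show "set_integrable ?M S (\<lambda>x. \<omega> x (u x)) \<and> \<bar>avg_current k S u \<omega>\<bar> \<le> B"
      using int_f S(3) unfolding set_integrable_def avg_current_def set_lebesgue_integral_def
      by (simp add: divide_le_eq abs_divide mult.commute)
  qed
qed

lemma set_integrable_dform:
  fixes \<omega> :: "'n::finite kform"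
  assumes "compact E" "dform k E \<omega>" "oriented_rect k E S u"
  shows "set_integrable (hausdorff_measure k) S (\<lambda>x. \<omega> x (u x))"
  using avg_current_integrable_bounded[OF assms(1,2)] assms(3) by blast

lemma avg_current_bounded:
  fixes \<omega> :: "'n::finite kform"
  assumes "compact E" "dform k E \<omega>"
  shows "\<exists>B. \<forall>S u. oriented_rect k E S u \<longrightarrow> \<bar>avg_current k S u \<omega>\<bar> \<le> B"
  using avg_current_integrable_bounded[OF assms] by blast

lemma linear_lincomb:
  "linear F \<Longrightarrow> linear G \<Longrightarrow> linear (\<lambda>z. a * F z + b * (G z :: real))"
  unfolding linear_iff by (simp add: linear_add linear_cmul algebra_simps)

lemma is_covector_lincomb:
  "is_covector k \<phi> \<Longrightarrow> is_covector k \<psi> \<Longrightarrow> is_covector k (\<lambda>v. a * \<phi> v + b * \<psi> v)"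
  unfolding is_covector_def by (auto intro!: linear_lincomb) (metis)+

lemma poly_fun_lincomb:
  fixes f g :: "real^'n \<Rightarrow> real"
  assumes "poly_fun r f" "poly_fun r g"
  shows "poly_fun r (\<lambda>x. a * f x + b * g x)"
proof -
  from assms obtain c d where
    "\<forall>x. f x = (\<Sum>\<alpha>\<in>{\<alpha> :: 'n \<Rightarrow> nat. sum \<alpha> UNIV \<le> r}. c \<alpha> * (\<Prod>i\<in>UNIV. (x $ i) ^ \<alpha> i))"
    "\<forall>x. g x = (\<Sum>\<alpha>\<in>{\<alpha> :: 'n \<Rightarrow> nat. sum \<alpha> UNIV \<le> r}. d \<alpha> * (\<Prod>i\<in>UNIV. (x $ i) ^ \<alpha> i))"
    unfolding poly_fun_def by blast
  then show ?thesis
    unfolding poly_fun_def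
    by (intro exI[of _ "\<lambda>\<alpha>. a * c \<alpha> + b * d \<alpha>"])
      (simp add: sum_distrib_left sum.distrib algebra_simps)
qed

lemma finite_multi_indices: "finite {\<alpha> :: 'n::finite \<Rightarrow> nat. sum \<alpha> UNIV \<le> r}"
proof (rule finite_subset)
  show "{\<alpha> :: 'n \<Rightarrow> nat. sum \<alpha> UNIV \<le> r} \<subseteq> PiE UNIV (\<lambda>_. {..r})"
  proof
    fix \<alpha> :: "'n \<Rightarrow> nat" assume "\<alpha> \<in> {\<alpha>. sum \<alpha> UNIV \<le> r}"
    then have "\<alpha> i \<le> r" for i
      using member_le_sum[of i UNIV \<alpha>] by auto
    then show "\<alpha> \<in> PiE UNIV (\<lambda>_. {..r})"
      by (auto simp: PiE_iff)
  qed
qed (simp add: finite_PiE)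

lemma poly_fun_const: "poly_fun r (\<lambda>x :: real^'n. c)"
proof -
  let ?c = "\<lambda>\<alpha> :: 'n \<Rightarrow> nat. if \<alpha> = (\<lambda>_. 0) then c else 0"
  have "(\<Sum>\<alpha>\<in>{\<alpha>. sum \<alpha> UNIV \<le> r}. ?c \<alpha> * (\<Prod>i\<in>UNIV. (x $ i) ^ \<alpha> i))
      = (\<Sum>\<alpha>\<in>{\<alpha>. sum \<alpha> UNIV \<le> r}. ?c \<alpha>)" for x :: "real^'n"
    by (intro sum.cong) auto
  also have "\<dots> = c"
    using finite_multi_indices[of r] by (subst sum.delta) auto
  finally show ?thesis
    unfolding poly_fun_def by (intro exI[of _ ?c]) simp
qed

lemma continuous_on_poly_fun:
  fixes f :: "real^'n \<Rightarrow> real"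
  assumes "poly_fun r f"
  shows "continuous_on UNIV f"
proof -
  obtain c where "\<forall>x. f x = (\<Sum>\<alpha>\<in>{\<alpha> :: 'n \<Rightarrow> nat. sum \<alpha> UNIV \<le> r}. c \<alpha> * (\<Prod>i\<in>UNIV. (x $ i) ^ \<alpha> i))"
    using assms unfolding poly_fun_def by blast
  then have "f = (\<lambda>x. \<Sum>\<alpha>\<in>{\<alpha> :: 'n \<Rightarrow> nat. sum \<alpha> UNIV \<le> r}. c \<alpha> * (\<Prod>i\<in>UNIV. (x $ i) ^ \<alpha> i))"
    by auto
  then show ?thesis
    by (simp add: continuous_intros continuous_on_component)
qed

lemma pform_lincomb:
  "pform r k p \<Longrightarrow> pform r k q \<Longrightarrow> pform r k (\<lambda>x v. a * p x v + b * q x v)"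
  unfolding pform_def by (auto intro: is_covector_lincomb poly_fun_lincomb)

lemma pform_const: "is_covector k \<phi> \<Longrightarrow> pform r k (\<lambda>x. \<phi>)"
  unfolding pform_def by (simp add: poly_fun_const)

lemma dform_lincomb:
  "dform k E f \<Longrightarrow> dform k E g \<Longrightarrow> dform k E (\<lambda>x v. a * f x v + b * g x v)"
  unfolding dform_def by (auto intro!: is_covector_lincomb continuous_on_add continuous_on_mult_left)

lemma dform_if_pform: "pform r k p \<Longrightarrow> dform k E p"
  unfolding pform_def dform_def using continuous_on_poly_fun continuous_on_subset by blast

lemma kform_diff_eq_lincomb: "(f :: 'n::finite kform) - g = (\<lambda>x v. 1 * f x v + (-1) * g x v)"
  by (simp add: fun_eq_iff)

lemma pform_diff: "pform r k f \<Longrightarrow> pform r k g \<Longrightarrow> pform r k (f - g)"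
  unfolding kform_diff_eq_lincomb by (rule pform_lincomb)

lemma dform_diff: "dform k E f \<Longrightarrow> dform k E g \<Longrightarrow> dform k E (f - g)"
  unfolding kform_diff_eq_lincomb by (rule dform_lincomb)

lemma avg_current_lincomb:
  fixes f g :: "'n::finite kform"
  assumes "compact E" "dform k E f" "dform k E g" "oriented_rect k E S u"
  shows "avg_current k S u (\<lambda>x v. a * f x v + b * g x v)
    = a * avg_current k S u f + b * avg_current k S u g"
proof -
  have "set_integrable (hausdorff_measure k) S (\<lambda>x. f x (u x))"
    "set_integrable (hausdorff_measure k) S (\<lambda>x. g x (u x))"
    using assms by (simp_all add: set_integrable_dform)
  then show ?thesis
    unfolding avg_current_def
    by (simp add: set_integral_add set_integrable_mult_right set_integral_mult_right add_divide_distrib)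
qed

lemma avg_current_diff:
  fixes f g :: "'n::finite kform"
  assumes "compact E" "dform k E f" "dform k E g" "oriented_rect k E S u"
  shows "avg_current k S u (f - g) = avg_current k S u f - avg_current k S u g"
  unfolding kform_diff_eq_lincomb avg_current_lincomb[OF assms] by simp

lemma abs_avg_current_le_norm0:
  fixes f :: "'n::finite kform"
  assumes "compact E" "dform k E f" "oriented_rect k E S u"
  shows "\<bar>avg_current k S u f\<bar> \<le> norm0 k E f"
proof -
  obtain B where "\<And>S u. oriented_rect k E S u \<Longrightarrow> \<bar>avg_current k S u f\<bar> \<le> B"
    using avg_current_bounded[OF assms(1,2)] by blast
  then have "bdd_above {\<bar>avg_current k S u f\<bar> | S u. oriented_rect k E S u}"
    by (auto intro!: bdd_aboveI[of _ B])
  then show ?thesis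
    unfolding norm0_def using assms(3) by (intro cSup_upper) auto
qed

lemma norm0_le:
  assumes "oriented_rect k E S0 u0"
    and "\<And>S u. oriented_rect k E S u \<Longrightarrow> \<bar>avg_current k S u f\<bar> \<le> b"
  shows "norm0 k E f \<le> b"
  unfolding norm0_def using assms by (intro cSup_least) auto

lemma norm0_nonneg:
  fixes f :: "'n::finite kform"
  assumes "compact E" "dform k E f" "oriented_rect k E S u"
  shows "0 \<le> norm0 k E f"
  using abs_avg_current_le_norm0[OF assms] by linarith

lemma norm0_diff_triangle:
  fixes f g h :: "'n::finite kform"
  assumes "compact E" "dform k E f" "dform k E g" "dform k E h" "oriented_rect k E S0 u0"
  shows "norm0 k E (f - g) \<le> norm0 k E (f - h) + norm0 k E (g - h)"
proof (rule norm0_le[OF assms(5)])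
  fix S u assume S: "oriented_rect k E S u"
  have "avg_current k S u (f - g) = avg_current k S u (f - h) - avg_current k S u (g - h)"
    using assms S by (simp add: avg_current_diff)
  then have "\<bar>avg_current k S u (f - g)\<bar>
      \<le> \<bar>avg_current k S u (f - h)\<bar> + \<bar>avg_current k S u (g - h)\<bar>"
    by (simp only: abs_triangle_ineq4)
  also have "\<dots> \<le> norm0 k E (f - h) + norm0 k E (g - h)"
    using assms S by (intro add_mono abs_avg_current_le_norm0 dform_diff)
  finally show "\<bar>avg_current k S u (f - g)\<bar> \<le> norm0 k E (f - h) + norm0 k E (g - h)" .
qed

section \<open>Weighted least squares\<close>

lemma weighted_lsq_orthogonal:
  fixes w a b :: "nat \<Rightarrow> real"
  assumes w: "\<And>i. i < m \<Longrightarrow> 0 \<le> w i"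
    and min: "\<And>t. (\<Sum>i<m. w i * (a i)\<^sup>2) \<le> (\<Sum>i<m. w i * (a i - t * b i)\<^sup>2)"
  shows "(\<Sum>i<m. w i * a i * b i) = 0"
proof -
  define X where "X = (\<Sum>i<m. w i * a i * b i)"
  define D where "D = (\<Sum>i<m. w i * (b i)\<^sup>2)"
  have "0 \<le> D"
    unfolding D_def using w by (intro sum_nonneg) auto
  have expand: "(\<Sum>i<m. w i * (a i - t * b i)\<^sup>2) = (\<Sum>i<m. w i * (a i)\<^sup>2) - 2 * t * X + t\<^sup>2 * D"
    for t
    by (simp add: X_def D_def power2_eq_square algebra_simps sum.distrib sum_subtractf
        sum_distrib_left)
  have quadratic: "0 \<le> t\<^sup>2 * D - 2 * t * X" for t
    using min[of t] expand[of t] by linarith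
  define t where "t = X / (D + 1)"
  have "t * (D + 1) = X"
    using \<open>0 \<le> D\<close> by (simp add: t_def)
  have "0 \<le> (D + 1)\<^sup>2 * (t\<^sup>2 * D - 2 * t * X)"
    using quadratic[of t] by simp
  also have "\<dots> = (t * (D + 1))\<^sup>2 * D - 2 * (t * (D + 1)) * (D + 1) * X"
    by (simp add: power2_eq_square algebra_simps)
  also have "\<dots> = - X\<^sup>2 * (D + 2)"
    unfolding \<open>t * (D + 1) = X\<close> by (simp add: power2_eq_square algebra_simps)
  finally have "X\<^sup>2 * (D + 2) \<le> 0"
    by simp
  with \<open>0 \<le> D\<close> have "X\<^sup>2 \<le> 0"
    by (simp add: mult_le_0_iff)
  then show ?thesis
    unfolding X_def[symmetric] by simp
qed

lemma weighted_sum_sq_le_of_orthogonal: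
  fixes w a b :: "nat \<Rightarrow> real"
  assumes "\<And>i. i < m \<Longrightarrow> 0 \<le> w i" "(\<Sum>i<m. w i * a i * b i) = 0"
  shows "(\<Sum>i<m. w i * (b i)\<^sup>2) \<le> (\<Sum>i<m. w i * (a i + b i)\<^sup>2)"
proof -
  have "(\<Sum>i<m. w i * (a i + b i)\<^sup>2)
      = (\<Sum>i<m. w i * (a i)\<^sup>2) + 2 * (\<Sum>i<m. w i * a i * b i) + (\<Sum>i<m. w i * (b i)\<^sup>2)"
    by (simp add: power2_eq_square algebra_simps sum.distrib sum_distrib_left)
  moreover have "0 \<le> (\<Sum>i<m. w i * (a i)\<^sup>2)"
    using assms(1) by (intro sum_nonneg) auto
  ultimately show ?thesis
    using assms(2) by simp
qed

lemma Max_abs_le_weighted: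
  fixes w b c :: "nat \<Rightarrow> real"
  assumes "0 < m" and w: "\<And>i. i < m \<Longrightarrow> 0 < w i"
    and bc: "(\<Sum>i<m. w i * (b i)\<^sup>2) \<le> (\<Sum>i<m. w i * (c i)\<^sup>2)"
    and cN: "\<And>i. i < m \<Longrightarrow> \<bar>c i\<bar> \<le> N"
  shows "Max ((\<lambda>i. \<bar>b i\<bar>) ` {..<m}) \<le> N * sqrt (\<Sum>i<m. w i / Min (w ` {..<m}))"
proof -
  define \<mu> where "\<mu> = Min (w ` {..<m})"
  have "0 < \<mu>"
    unfolding \<mu>_def using \<open>0 < m\<close> w by (subst Min_gr_iff) auto
  have "0 \<le> N"
    using cN[of 0] \<open>0 < m\<close> by linarith
  have "(c i)\<^sup>2 \<le> N\<^sup>2" if "i < m" for i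
    using cN[OF that] by (metis abs_ge_zero power2_abs power_mono)
  then have "(\<Sum>i<m. w i * (c i)\<^sup>2) \<le> (\<Sum>i<m. w i * N\<^sup>2)"
    using w by (intro sum_mono mult_left_mono) (auto intro: less_imp_le)
  also have "\<dots> = (\<Sum>i<m. w i) * N\<^sup>2"
    by (rule sum_distrib_right[symmetric])
  finally have sum_bN: "(\<Sum>i<m. w i * (b i)\<^sup>2) \<le> (\<Sum>i<m. w i) * N\<^sup>2"
    using bc by linarith
  have "\<bar>b i\<bar> \<le> N * sqrt (\<Sum>j<m. w j / \<mu>)" if "i < m" for i
  proof -
    have "\<mu> * (b i)\<^sup>2 \<le> w i * (b i)\<^sup>2"
      unfolding \<mu>_def using that by (intro mult_right_mono Min_le) auto
    also have "\<dots> \<le> (\<Sum>j<m. w j * (b j)\<^sup>2)"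
      using that w[THEN less_imp_le] by (intro member_le_sum) auto
    finally have "(b i)\<^sup>2 \<le> N\<^sup>2 * (\<Sum>j<m. w j / \<mu>)"
      using sum_bN \<open>0 < \<mu>\<close> by (simp add: field_simps sum_divide_distrib[symmetric])
    then have "sqrt ((b i)\<^sup>2) \<le> sqrt (N\<^sup>2 * (\<Sum>j<m. w j / \<mu>))"
      by (rule real_sqrt_le_mono)
    then show ?thesis
      using \<open>0 \<le> N\<close> by (simp add: real_sqrt_mult)
  qed
  then show ?thesis
    unfolding \<mu>_def[symmetric] using \<open>0 < m\<close> by (subst Max_le_iff) auto
qed

lemma is_lsq_shift:
  fixes \<omega> p \<theta> :: "'n::finite kform"
  assumes lsq: "is_lsq r k T m w \<omega> p" and "pform r k \<theta>"
  shows "is_lsq r k T m w (\<omega> - \<theta>) (p - \<theta>)"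
  unfolding is_lsq_def
proof (intro conjI allI impI)
  show "pform r k (p - \<theta>)"
    using assms by (intro pform_diff) (simp_all add: is_lsq_def)
  fix \<theta>' :: "'n kform" assume "pform r k \<theta>'"
  then have "pform r k (\<lambda>x v. 1 * \<theta> x v + 1 * \<theta>' x v)"
    using \<open>pform r k \<theta>\<close> by (intro pform_lincomb)
  moreover have "\<omega> - \<theta> - (p - \<theta>) = \<omega> - p" "\<omega> - \<theta> - \<theta>' = \<omega> - (\<lambda>x v. 1 * \<theta> x v + 1 * \<theta>' x v)"
    by (simp_all add: fun_eq_iff)
  ultimately show "(\<Sum>i<m. w i * (avg_current k (fst (T i)) (snd (T i)) (\<omega> - \<theta> - (p - \<theta>)))\<^sup>2)
      \<le> (\<Sum>i<m. w i * (avg_current k (fst (T i)) (snd (T i)) (\<omega> - \<theta> - \<theta>'))\<^sup>2)"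
    using lsq unfolding is_lsq_def by simp
qed

lemma avg_current_pos:
  fixes \<omega> :: "'n::finite kform"
  assumes "compact E" "dform k E \<omega>" and S: "oriented_rect k E S u"
    and pos: "\<And>x. x \<in> S \<Longrightarrow> 0 < \<omega> x (u x)"
  shows "0 < avg_current k S u \<omega>"
proof -
  let ?M = "hausdorff_measure k :: (real^'n) measure"
  let ?f = "\<lambda>x. indicator S x * \<omega> x (u x)"
  have int: "integrable ?M ?f"
    using set_integrable_dform[OF assms(1-3)] unfolding set_integrable_def by simp
  have nonneg: "0 \<le> ?f x" for x
    using pos[of x] by (cases "x \<in> S") auto
  have "integral\<^sup>L ?M ?f \<noteq> 0"
  proof
    assume "integral\<^sup>L ?M ?f = 0"
    then have "AE x in ?M. ?f x = 0"
      using integral_nonneg_eq_0_iff_AE[OF int] nonneg by simp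
    then have "AE x in ?M. x \<notin> S"
      by (rule AE_mp) (auto intro!: AE_I2 dest: pos)
    then have "S \<in> null_sets ?M"
      using AE_iff_null_sets[OF measure_oriented_rect(1)[OF S]] by simp
    then have "emeasure ?M S = 0"
      by (rule null_setsD1)
    then show False
      using S measure_oriented_rect(3)[OF S]
      by (simp add: oriented_rect_def emeasure_hausdorff_measure)
  qed
  moreover have "0 \<le> integral\<^sup>L ?M ?f"
    using nonneg by (intro integral_nonneg_AE) auto
  ultimately show ?thesis
    using measure_oriented_rect(3)[OF S]
    unfolding avg_current_def set_lebesgue_integral_def by simp
qed

lemma mesh_current_pform_pos:
  fixes E :: "(real^'n) set"
  assumes "compact E" and mesh: "mesh_current k E S u"
  obtains \<theta> where "pform r k \<theta>" "0 < avg_current k S u \<theta>"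
proof -
  from mesh obtain a :: "nat \<Rightarrow> real^'n" where dim: "dim (a ` {..<k}) = k"
    and orient: "\<forall>x\<in>S. \<exists>c>0. \<forall>\<phi>. is_covector k \<phi> \<longrightarrow> \<phi> (u x) = c * \<phi> a"
    unfolding mesh_current_def by blast
  obtain g :: "nat \<Rightarrow> real^'n \<Rightarrow> real" where lin: "\<And>j. linear (g j)"
    and dual: "\<And>i j. i < k \<Longrightarrow> j < k \<Longrightarrow> g j (a i) = (if i = j then 1 else 0)"
    using dual_functionals_exist[OF dim] by blast
  have cov: "is_covector k (wedge_functionals k g)"
    using lin by (rule is_covector_wedge_functionals)
  have "wedge_functionals k g a = 1"
    using dual by (rule wedge_functionals_dual_basis)
  then have "0 < wedge_functionals k g (u x)" if "x \<in> S" for x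
    using orient that cov by force
  moreover have "pform r k (\<lambda>x. wedge_functionals k g)"
    using cov by (rule pform_const)
  ultimately show ?thesis
    using assms mesh unfolding mesh_current_def
    by (intro that avg_current_pos dform_if_pform) auto
qed

lemma admissible_mesh_constant_ge_1:
  fixes E :: "(real^'n) set"
  assumes "compact E" and adm: "admissible_mesh k E T M C"
  shows "1 \<le> C"
proof -
  let ?avg = "\<lambda>\<theta> i. \<bar>avg_current k (fst (T 0 i)) (snd (T 0 i)) \<theta>\<bar>"
  have "0 < M 0" and mesh: "\<And>i. i < M 0 \<Longrightarrow> mesh_current k E (fst (T 0 i)) (snd (T 0 i))"
    and admissible: "\<And>\<theta>. pform 0 k \<theta> \<Longrightarrow> norm0 k E \<theta> \<le> C * Max (?avg \<theta> ` {..<M 0})"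
    using adm unfolding admissible_mesh_def by auto
  obtain \<theta> where \<theta>: "pform 0 k \<theta>" "0 < avg_current k (fst (T 0 0)) (snd (T 0 0)) \<theta>"
    using mesh_current_pform_pos[OF \<open>compact E\<close> mesh[OF \<open>0 < M 0\<close>]] by blast
  have pos: "0 < Max (?avg \<theta> ` {..<M 0})"
    using \<theta>(2) \<open>0 < M 0\<close> by (subst Max_gr_iff) (auto intro!: bexI[of _ 0])
  moreover have "Max (?avg \<theta> ` {..<M 0}) \<le> norm0 k E \<theta>"
    using \<open>0 < M 0\<close> mesh \<theta>(1) \<open>compact E\<close>
    by (subst Max_le_iff) (auto intro!: abs_avg_current_le_norm0 dform_if_pform simp: mesh_current_def)
  ultimately have "Max (?avg \<theta> ` {..<M 0}) \<le> C * Max (?avg \<theta> ` {..<M 0})"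
    using admissible[OF \<theta>(1)] by linarith
  with pos show ?thesis
    by (simp add: mult_le_cancel_right1)
qed

lemma mesh_current_dim_le:
  fixes E :: "(real^'n) set"
  assumes "mesh_current k E S u"
  shows "k \<le> CARD('n)"
proof -
  obtain a :: "nat \<Rightarrow> real^'n" where "dim (a ` {..<k}) = k"
    using assms unfolding mesh_current_def by blast
  then show ?thesis
    using dim_subset_UNIV_cart[of "a ` {..<k}"] by simp
qed

lemma pdim_pos: "k \<le> n \<Longrightarrow> 0 < pdim n k r"
  unfolding pdim_def by (simp add: zero_less_binomial)

lemma is_lsq_orthogonal:
  fixes \<omega> p :: "'n::finite kform"
  assumes E: "compact E" and S: "\<And>i. i < m \<Longrightarrow> oriented_rect k E (fst (T i)) (snd (T i))"
    and w: "\<And>i. i < m \<Longrightarrow> 0 \<le> w i"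
    and \<omega>: "dform k E \<omega>" and lsq: "is_lsq r k T m w \<omega> p"
  shows "(\<Sum>i<m. w i * avg_current k (fst (T i)) (snd (T i)) (\<omega> - p)
      * avg_current k (fst (T i)) (snd (T i)) p) = 0"
proof -
  define avg where "avg i f = avg_current k (fst (T i)) (snd (T i)) f" for i f
  have p: "pform r k p" "dform k E p"
    using lsq by (auto simp: is_lsq_def intro: dform_if_pform)
  have "(\<Sum>i<m. w i * (avg i (\<omega> - p))\<^sup>2) \<le> (\<Sum>i<m. w i * (avg i (\<omega> - p) - t * avg i p)\<^sup>2)"
    for t
  proof -
    define \<theta> where "\<theta> = (\<lambda>x v. 1 * p x v + t * p x v)"
    have "pform r k \<theta>"
      unfolding \<theta>_def using p by (intro pform_lincomb)
    have "avg i (\<omega> - \<theta>) = avg i (\<omega> - p) - t * avg i p" if "i < m" for i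
    proof -
      have "avg i (\<omega> - \<theta>) = avg i \<omega> - avg i \<theta>" "avg i (\<omega> - p) = avg i \<omega> - avg i p"
        using avg_current_diff[OF E \<omega> dform_if_pform[OF \<open>pform r k \<theta>\<close>] S[OF that]]
          avg_current_diff[OF E \<omega> p(2) S[OF that]] by (simp_all add: avg_def)
      moreover have "avg i \<theta> = 1 * avg i p + t * avg i p"
        unfolding avg_def \<theta>_def by (rule avg_current_lincomb[OF E p(2) p(2) S[OF that]])
      ultimately show ?thesis
        by linarith
    qed
    have "(\<Sum>i<m. w i * (avg i (\<omega> - p))\<^sup>2) \<le> (\<Sum>i<m. w i * (avg i (\<omega> - \<theta>))\<^sup>2)"
      using lsq \<open>pform r k \<theta>\<close> unfolding is_lsq_def avg_def by blast
    also have "\<dots> = (\<Sum>i<m. w i * (avg i (\<omega> - p) - t * avg i p)\<^sup>2)"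
      using \<open>\<And>i. i < m \<Longrightarrow> avg i (\<omega> - \<theta>) = avg i (\<omega> - p) - t * avg i p\<close>
      by (intro sum.cong) auto
    finally show ?thesis .
  qed
  with w show ?thesis
    unfolding avg_def by (rule weighted_lsq_orthogonal)
qed

lemma is_lsq_weighted_sq_le:
  fixes \<omega> p :: "'n::finite kform"
  assumes E: "compact E" and S: "\<And>i. i < m \<Longrightarrow> oriented_rect k E (fst (T i)) (snd (T i))"
    and w: "\<And>i. i < m \<Longrightarrow> 0 \<le> w i"
    and \<omega>: "dform k E \<omega>" and lsq: "is_lsq r k T m w \<omega> p"
  shows "(\<Sum>i<m. w i * (avg_current k (fst (T i)) (snd (T i)) p)\<^sup>2)
    \<le> (\<Sum>i<m. w i * (avg_current k (fst (T i)) (snd (T i)) \<omega>)\<^sup>2)"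
proof -
  define avg where "avg i f = avg_current k (fst (T i)) (snd (T i)) f" for i f
  have "dform k E p"
    using lsq by (auto simp: is_lsq_def intro: dform_if_pform)
  then have decompose: "avg i \<omega> = avg i (\<omega> - p) + avg i p" if "i < m" for i
    using avg_current_diff[OF E \<omega> _ S[OF that]] by (simp add: avg_def)
  have "(\<Sum>i<m. w i * (avg i p)\<^sup>2) \<le> (\<Sum>i<m. w i * (avg i (\<omega> - p) + avg i p)\<^sup>2)"
    using w is_lsq_orthogonal[OF assms] unfolding avg_def by (rule weighted_sum_sq_le_of_orthogonal)
  also have "\<dots> = (\<Sum>i<m. w i * (avg i \<omega>)\<^sup>2)"
    using decompose by (intro sum.cong) auto
  finally show ?thesis
    unfolding avg_def .
qed

lemma lsq_norm0_le:
  fixes E :: "(real^'n) set" and \<omega> p :: "'n kform"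
  assumes E: "compact E" and adm: "admissible_mesh k E T M C"
    and w: "\<And>i. i < M r \<Longrightarrow> 0 < w i"
    and \<omega>: "dform k E \<omega>" and lsq: "is_lsq r k (T r) (M r) w \<omega> p"
  shows "norm0 k E p \<le> C * sqrt (\<Sum>i<M r. w i / Min (w ` {..<M r})) * norm0 k E \<omega>"
proof -
  define avg where "avg i f = avg_current k (fst (T r i)) (snd (T r i)) f" for i f
  have "0 < M r" and S: "\<And>i. i < M r \<Longrightarrow> oriented_rect k E (fst (T r i)) (snd (T r i))"
    and admissible: "\<And>\<theta>. pform r k \<theta> \<Longrightarrow> norm0 k E \<theta> \<le> C * Max ((\<lambda>i. \<bar>avg i \<theta>\<bar>) ` {..<M r})"
    using adm unfolding admissible_mesh_def mesh_current_def avg_def by auto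
  have "(\<Sum>i<M r. w i * (avg i p)\<^sup>2) \<le> (\<Sum>i<M r. w i * (avg i \<omega>)\<^sup>2)"
    using is_lsq_weighted_sq_le[OF E S _ \<omega> lsq] w unfolding avg_def by (simp add: less_imp_le)
  moreover have "\<bar>avg i \<omega>\<bar> \<le> norm0 k E \<omega>" if "i < M r" for i
    unfolding avg_def using E \<omega> S[OF that] by (rule abs_avg_current_le_norm0)
  ultimately have "Max ((\<lambda>i. \<bar>avg i p\<bar>) ` {..<M r})
      \<le> norm0 k E \<omega> * sqrt (\<Sum>i<M r. w i / Min (w ` {..<M r}))"
    using \<open>0 < M r\<close> w by (intro Max_abs_le_weighted) auto
  moreover have "0 \<le> C"
    using admissible_mesh_constant_ge_1[OF E adm] by simp
  ultimately have "C * Max ((\<lambda>i. \<bar>avg i p\<bar>) ` {..<M r})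
      \<le> C * (norm0 k E \<omega> * sqrt (\<Sum>i<M r. w i / Min (w ` {..<M r})))"
    by (rule mult_left_mono)
  moreover have "pform r k p"
    using lsq by (simp add: is_lsq_def)
  ultimately show ?thesis
    using admissible by (fastforce simp: ac_simps)
qed

lemma lsq_error_le_dist_poly:
  fixes \<omega> p :: "'n::finite kform"
  assumes E: "compact E" and S: "oriented_rect k E S u" and "0 \<le> K"
    and bound: "\<And>\<omega>' p'. dform k E \<omega>' \<Longrightarrow> is_lsq r k T m w \<omega>' p' \<Longrightarrow> norm0 k E p' \<le> K * norm0 k E \<omega>'"
    and \<omega>: "dform k E \<omega>" and lsq: "is_lsq r k T m w \<omega> p"
  shows "norm0 k E (\<omega> - p) \<le> (1 + K) * dist_poly r k E \<omega>"
proof -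
  have p: "dform k E p"
    using lsq by (auto simp: is_lsq_def intro: dform_if_pform)
  have "norm0 k E (\<omega> - p) \<le> (1 + K) * norm0 k E (\<omega> - \<theta>)" if \<theta>: "pform r k \<theta>" for \<theta>
  proof -
    have "dform k E \<theta>"
      using \<theta> by (rule dform_if_pform)
    with E \<omega> p have "norm0 k E (\<omega> - p) \<le> norm0 k E (\<omega> - \<theta>) + norm0 k E (p - \<theta>)"
      using S by (intro norm0_diff_triangle)
    moreover have "norm0 k E (p - \<theta>) \<le> K * norm0 k E (\<omega> - \<theta>)"
      using \<omega> \<open>dform k E \<theta>\<close> is_lsq_shift[OF lsq \<theta>] by (intro bound dform_diff)
    ultimately show ?thesis
      unfolding distrib_right mult_1_left by linarith
  qed
  moreover have "pform r k (\<lambda>x v. 0)"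
    using pform_const[of k "\<lambda>v. 0"] by (simp add: is_covector_def linear_zero)
  ultimately have "norm0 k E (\<omega> - p) / (1 + K) \<le> dist_poly r k E \<omega>"
    unfolding dist_poly_def using \<open>0 \<le> K\<close>
    by (intro cInf_greatest) (auto simp: divide_le_eq mult.commute)
  then show ?thesis
    using \<open>0 \<le> K\<close> by (simp add: divide_le_eq mult.commute)
qed

lemma lsq_projector_bounds:
  fixes E :: "(real^'n) set"
  assumes E: "compact E" and adm: "admissible_mesh k E T M C" and w: "\<And>i. i < M r \<Longrightarrow> 0 < w i"
  shows "let K = C * sqrt (\<Sum>i<M r. w i / Min (w ` {..<M r})) * real (pdim CARD('n) k r) in
           (\<forall>\<omega> p. dform k E \<omega> \<and> norm0 k E \<omega> = 1 \<and> is_lsq r k (T r) (M r) w \<omega> p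
                \<longrightarrow> norm0 k E p \<le> K) \<and>
           (\<forall>\<omega> p. dform k E \<omega> \<and> is_lsq r k (T r) (M r) w \<omega> p
                \<longrightarrow> norm0 k E (\<omega> - p) \<le> (1 + K) * dist_poly r k E \<omega>)"
proof -
  define K0 where "K0 = C * sqrt (\<Sum>i<M r. w i / Min (w ` {..<M r}))"
  define K where "K = K0 * real (pdim CARD('n) k r)"
  have mesh: "mesh_current k E (fst (T r 0)) (snd (T r 0))"
    using adm unfolding admissible_mesh_def by auto
  have "0 < Min (w ` {..<M r})" if "i < M r" for i
    using that w by (subst Min_gr_iff) auto
  then have "0 \<le> (\<Sum>i<M r. w i / Min (w ` {..<M r}))"
    using w by (intro sum_nonneg) (simp add: less_imp_le)
  then have "0 \<le> K0"
    using admissible_mesh_constant_ge_1[OF E adm] unfolding K0_def by simp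
  moreover have "1 \<le> pdim CARD('n) k r"
    using pdim_pos[OF mesh_current_dim_le[OF mesh]] by (simp add: Suc_le_eq)
  ultimately have "K0 \<le> K" "0 \<le> K"
    unfolding K_def by (simp_all add: mult_le_cancel_left1 order_trans)
  have bound: "norm0 k E p \<le> K * norm0 k E \<omega>"
    if "dform k E \<omega>" "is_lsq r k (T r) (M r) w \<omega> p" for \<omega> p
  proof -
    have "norm0 k E p \<le> K0 * norm0 k E \<omega>"
      unfolding K0_def using lsq_norm0_le[OF E adm w that] .
    also have "\<dots> \<le> K * norm0 k E \<omega>"
      using \<open>K0 \<le> K\<close> norm0_nonneg[OF E that(1)] mesh
      by (intro mult_right_mono) (auto simp: mesh_current_def)
    finally show ?thesis .
  qed
  moreover have "norm0 k E (\<omega> - p) \<le> (1 + K) * dist_poly r k E \<omega>"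
    if "dform k E \<omega>" "is_lsq r k (T r) (M r) w \<omega> p" for \<omega> p
    using lsq_error_le_dist_poly[OF E _ \<open>0 \<le> K\<close> bound that] mesh
    by (auto simp: mesh_current_def)
  ultimately show ?thesis
    unfolding Let_def K_def K0_def by (metis mult_1_right)
qed

theorem mainTheorem17:
  fixes E :: "(real^'n) set" and k :: nat and C :: real
    and T :: "nat \<Rightarrow> nat \<Rightarrow> (real^'n) set \<times> (real^'n \<Rightarrow> nat \<Rightarrow> real^'n)"
    and M :: "nat \<Rightarrow> nat" and w :: "nat \<Rightarrow> nat \<Rightarrow> real"
  assumes "compact E" and "interior E \<noteq> {}"
    and "admissible_mesh k E T M C"
    and "\<forall>r. \<forall>i<M r. 0 < w r i"
  shows "\<forall>r. let K = C * sqrt (\<Sum>i<M r. w r i / Min (w r ` {..<M r})) * real (pdim CARD('n) k r) in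
           (\<forall>\<omega> p. dform k E \<omega> \<and> norm0 k E \<omega> = 1 \<and> is_lsq r k (T r) (M r) (w r) \<omega> p
                \<longrightarrow> norm0 k E p \<le> K) \<and>
           (\<forall>\<omega> p. dform k E \<omega> \<and> is_lsq r k (T r) (M r) (w r) \<omega> p
                \<longrightarrow> norm0 k E (\<omega> - p) \<le> (1 + K) * dist_poly r k E \<omega>)"
  using assms(4) by (intro allI lsq_projector_bounds[OF assms(1,3)]) blast

end
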